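(* In the setting described in the context, suppose $n\in\mathbb{N}$, $\omega,\upsilon\in\mathcal{P}_n$, $y\in T^n\omega\cap T^n\upsilon$, and $\mathcal{D}^n(\ell_\omega y)\mathcal{K}\pitchfork\mathcal{D}^n(\ell_\upsilon y)\mathcal{K}$. Then there exists a $1$-dimensional linear subspace $L\subset\mathbb{R}^d$ such that for all $v\in L\setminus\{0\}$, \[ |D(\tau_n\circ\ell_\omega)(y)v-D(\tau_n\circ\ell_\upsilon)(y)v|>C_5\big(|D\ell_\omega(y)v|+|D\ell_\upsilon(y)v|\big). \]
   Context: $X$ is a compact open subset of $\mathbb{R}^d$ (as in the paper). $T:X\to X$: finite partition $\mathcal{P}$ of a full-measure subset into connected open sets, $T|_\omega$ a $\mathcal{C}^1$ diffeomorphism onto $T\omega$ for $\omega\in\mathcal{P}$; $\|(DT^n(x))^{-1}\|\le e^{-\lambda n}$ (some $\lambda>0$). $\tau:X\to(0,\infty)$ is $\mathcal{C}^{1+\alpha}$ with $\|D\tau(x)(DT(x))^{-1}\|\le C_3$ for $x\in\omega\in\mathcal{P}$; $C_5=2C_3/(1-e^{-\lambda})$. $\mathcal{P}_n$ is the $n$-th refinement of $\mathcal{P}$; for $\omega\in\mathcal{P}_n$, $\ell_\omega=(T^n|_\omega)^{-1}:T^n\omega\to\omega$. $\tau_n=\sum_{j=0}^{n-1}\tau\circ T^j$. $\mathcal{D}^n(x)=\begin{pmatrix}DT^n(x)&0\\ D\tau_n(x)&1\end{pmatrix}$ acting on $\mathbb{R}^{d+1}$; $\mathcal{K}=\{(a,b):a\in\mathbb{R}^d,b\in\mathbb{R},|b|\le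 C_5|a|\}$. For $x_1,x_2$ with $T^nx_1=T^nx_2$, $\mathcal{D}^n(x_1)\mathcal{K}\pitchfork\mathcal{D}^n(x_2)\mathcal{K}$ means that $\mathcal{D}^n(x_1)\mathcal{K}\cap\mathcal{D}^n(x_2)\mathcal{K}$ contains no $d$-dimensional linear subspace. *)

theory Defs
  imports "HOL-Analysis.Analysis"
begin

definition refinement ::
  "(real^'d) set \<Rightarrow> (real^'d) set set \<Rightarrow> (real^'d \<Rightarrow> real^'d) \<Rightarrow> nat \<Rightarrow> (real^'d) set set" where
  "refinement X P T n = {A. A \<noteq> {} \<and> (\<exists>ws. length ws = n \<and> set ws \<subseteq> P \<and>
       A = {x\<in>X. \<forall>j<n. (T ^^ j) x \<in> ws ! j})}"

primrec DTpow ::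
  "(real^'d \<Rightarrow> real^'d) \<Rightarrow> (real^'d \<Rightarrow> real^'d^'d) \<Rightarrow> nat \<Rightarrow> real^'d \<Rightarrow> real^'d^'d" where
  "DTpow T DT 0 x = mat 1"
| "DTpow T DT (Suc n) x = DT ((T ^^ n) x) ** DTpow T DT n x"

definition tau_n :: "(real^'d \<Rightarrow> real^'d) \<Rightarrow> (real^'d \<Rightarrow> real) \<Rightarrow> nat \<Rightarrow> real^'d \<Rightarrow> real" where
  "tau_n T \<tau> n x = (\<Sum>j<n. \<tau> ((T ^^ j) x))"

definition Dtau_n ::
  "(real^'d \<Rightarrow> real^'d) \<Rightarrow> (real^'d \<Rightarrow> real^'d^'d) \<Rightarrow> (real^'d \<Rightarrow> real^'d) \<Rightarrow> nat \<Rightarrow> real^'d \<Rightarrow> real^'d" where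
  "Dtau_n T DT D\<tau> n x = (\<Sum>j<n. transpose (DTpow T DT j x) *v D\<tau> ((T ^^ j) x))"

text \<open>The linear map calD^n(x) on R^{d+1} = R^d x R: (a,b) |-> (DT^n(x) a, D tau_n(x) a + b).\<close>
definition calD ::
  "(real^'d \<Rightarrow> real^'d) \<Rightarrow> (real^'d \<Rightarrow> real^'d^'d) \<Rightarrow> (real^'d \<Rightarrow> real^'d) \<Rightarrow> nat \<Rightarrow> real^'d
     \<Rightarrow> ((real^'d) \<times> real) \<Rightarrow> ((real^'d) \<times> real)" where
  "calD T DT D\<tau> n x = (\<lambda>(a, b). (DTpow T DT n x *v a, Dtau_n T DT D\<tau> n x \<bullet> a + b))"

definition cone :: "real \<Rightarrow> ((real^'d) \<times> real) set" where
  "cone C = {(a, b). \<bar>b\<bar> \<le> C * norm a}"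

definition transversal ::
  "(real^'d \<Rightarrow> real^'d) \<Rightarrow> (real^'d \<Rightarrow> real^'d^'d) \<Rightarrow> (real^'d \<Rightarrow> real^'d) \<Rightarrow> real \<Rightarrow> nat
     \<Rightarrow> real^'d \<Rightarrow> real^'d \<Rightarrow> bool" where
  "transversal T DT D\<tau> C n x1 x2 \<longleftrightarrow>
     \<not> (\<exists>S. subspace S \<and> dim S = CARD('d) \<and>
          S \<subseteq> calD T DT D\<tau> n x1 ` cone C \<inter> calD T DT D\<tau> n x2 ` cone C)"

definition C1_diffeo_on ::
  "(real^'d \<Rightarrow> real^'d) \<Rightarrow> (real^'d \<Rightarrow> real^'d^'d) \<Rightarrow> (real^'d) set \<Rightarrow> bool" where
  "C1_diffeo_on T DT w \<longleftrightarrow> inj_on T w \<and> open (T ` w) \<and>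
     (\<forall>x\<in>w. (T has_derivative (\<lambda>h. DT x *v h)) (at x)) \<and> continuous_on w DT \<and>
     (\<exists>g Dg. (\<forall>x\<in>w. g (T x) = x) \<and>
        (\<forall>y\<in>T ` w. (g has_derivative (\<lambda>h. Dg y *v h)) (at y)) \<and> continuous_on (T ` w) Dg)"

definition ell :: "(real^'d \<Rightarrow> real^'d) \<Rightarrow> nat \<Rightarrow> (real^'d) set \<Rightarrow> real^'d \<Rightarrow> real^'d" where
  "ell T n w = the_inv_into w (T ^^ n)"

end

theory Submission
  imports Defs
begin

(*
  Let M_i = (DT^n(x_i))^{-1} and g_i = D\<tau>_n(x_i) for the two preimages x_i of y.  The image
  cone D^n(x_i)K consists of the (p, q) with |q - g_i M_i p| \<le> C5 |M_i p|.  If the functionals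
  g_1 M_1 and g_2 M_2 were within C5 (|M_1 p| + |M_2 p|) of each other at every p, a separating
  hyperplane argument would produce one functional u within C5 |M_i p| of both, and the graph of u
  would be a d-dimensional subspace of both image cones, contradicting transversality.  So some
  direction w violates that bound, and then so does every nonzero multiple of w.  By the chain rule
  and the inverse function theorem, M_i and g_i M_i are the derivatives at y of \<ell>_i and \<tau>_n \<circ> \<ell>_i.
*)

lemma matrix_inv_left: "invertible A \<Longrightarrow> matrix_inv A ** A = mat 1"
  and matrix_inv_right: "invertible A \<Longrightarrow> A ** matrix_inv A = mat 1"
  unfolding invertible_def matrix_inv_def by (metis (mono_tags, lifting) someI_ex)+

lemma shear_image_cone_iff:
  fixes A M :: "real^'d^'d" and g :: "real^'d"
  assumes "M ** A = mat 1"
  shows "(p, q) \<in> (\<lambda>(a, b). (A *v a, g \<bullet> a + b)) ` cone C \<longleftrightarrow>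
         \<bar>q - g \<bullet> (M *v p)\<bar> \<le> C * norm (M *v p)"
proof -
  have MA: "M *v (A *v a) = a" for a
    using assms by (simp add: matrix_vector_mul_assoc)
  have AM: "A *v (M *v p) = p"
    using assms matrix_left_right_inverse by (metis matrix_vector_mul_assoc matrix_vector_mul_lid)
  show ?thesis
  proof
    assume "(p, q) \<in> (\<lambda>(a, b). (A *v a, g \<bullet> a + b)) ` cone C"
    then show "\<bar>q - g \<bullet> (M *v p)\<bar> \<le> C * norm (M *v p)"
      by (auto simp: cone_def MA)
  next
    assume "\<bar>q - g \<bullet> (M *v p)\<bar> \<le> C * norm (M *v p)"
    then have "(M *v p, q - g \<bullet> (M *v p)) \<in> cone C" by (simp add: cone_def)
    then show "(p, q) \<in> (\<lambda>(a, b). (A *v a, g \<bullet> a + b)) ` cone C"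
      by (rule rev_image_eqI) (simp add: AM)
  qed
qed

lemma graph_of_functional_subspace:
  fixes u :: "real^'d"
  shows "subspace (range (\<lambda>w. (w, u \<bullet> w)))"
    and "dim (range (\<lambda>w. (w, u \<bullet> w))) = CARD('d)"
proof -
  have lin: "linear (\<lambda>w. (w, u \<bullet> w))"
    by (rule linearI) (auto simp: inner_add_right)
  show "subspace (range (\<lambda>w. (w, u \<bullet> w)))"
    using lin by (intro linear_subspace_image subspace_UNIV)
  have "inj_on (\<lambda>w. (w, u \<bullet> w)) UNIV" by (auto intro: inj_onI)
  then show "dim (range (\<lambda>w. (w, u \<bullet> w))) = CARD('d)"
    using dim_image_eq[OF lin] by simp
qed

lemma functional_between_close_functionals:
  fixes f1 f2 :: "real^'d" and M1 M2 :: "real^'d^'d"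
  assumes C: "C \<ge> 0"
    and close: "\<And>w. \<bar>f1 \<bullet> w - f2 \<bullet> w\<bar> \<le> C * (norm (M1 *v w) + norm (M2 *v w))"
  obtains u where "\<And>w. \<bar>u \<bullet> w - f1 \<bullet> w\<bar> \<le> C * norm (M1 *v w)"
    and "\<And>w. \<bar>u \<bullet> w - f2 \<bullet> w\<bar> \<le> C * norm (M2 *v w)"
proof -
  define S where "S = (\<lambda>(z1, z2). transpose M1 *v z1 + transpose M2 *v z2)"
  have lin: "linear S"
    unfolding S_def by (rule linearI) (auto simp: vec_eq_iff vector_matrix_mult_def sum.distrib sum_distrib_left algebra_simps)
  have "f2 - f1 \<in> S ` (cball 0 C \<times> cball 0 C)"
  proof (rule ccontr)
    assume "f2 - f1 \<notin> S ` (cball 0 C \<times> cball 0 C)"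
    moreover have "convex (S ` (cball 0 C \<times> cball 0 C))"
      using lin by (intro convex_linear_image convex_Times convex_cball)
    moreover have "closed (S ` (cball 0 C \<times> cball 0 C))"
      using lin by (intro compact_imp_closed compact_continuous_image linear_continuous_on
          compact_Times compact_cball) (simp add: linear_conv_bounded_linear)
    ultimately obtain a b where ab: "a \<bullet> (f2 - f1) < b" "\<forall>x\<in>S ` (cball 0 C \<times> cball 0 C). b < a \<bullet> x"
      using separating_hyperplane_closed_point by blast
    \<comment> \<open>\<open>z\<^sub>i\<close> minimises \<open>z \<bullet> (M\<^sub>i *v a)\<close> over the ball of radius \<open>C\<close>\<close>
    define z1 where "z1 = - (C / norm (M1 *v a)) *\<^sub>R (M1 *v a)"
    define z2 where "z2 = - (C / norm (M2 *v a)) *\<^sub>R (M2 *v a)"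
    have "(z1, z2) \<in> cball 0 C \<times> cball 0 C"
      using C by (auto simp: z1_def z2_def)
    then have "b < a \<bullet> S (z1, z2)" using ab(2) by blast
    also have "a \<bullet> S (z1, z2) = - C * (norm (M1 *v a) + norm (M2 *v a))"
      by (auto simp: S_def z1_def z2_def inner_add_right inner_commute[of a] dot_lmul_matrix
          power2_norm_eq_inner[symmetric] power2_eq_square algebra_simps)
    finally show False
      using ab(1) close[of a] by (simp add: inner_diff_right inner_commute[of a])
  qed
  then obtain z1 z2 where z: "norm z1 \<le> C" "norm z2 \<le> C"
    and e: "f2 - f1 = transpose M1 *v z1 + transpose M2 *v z2"
    by (auto simp: S_def)
  have bound: "\<bar>z \<bullet> (M *v w)\<bar> \<le> C * norm (M *v w)" if "norm z \<le> C" for z and M :: "real^'d^'d" and w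
    using Cauchy_Schwarz_ineq2[of z "M *v w"] mult_right_mono[OF that norm_ge_zero, of "M *v w"] by linarith
  show ?thesis
  proof
    fix w
    show "\<bar>(f1 + transpose M1 *v z1) \<bullet> w - f1 \<bullet> w\<bar> \<le> C * norm (M1 *v w)"
      using bound[OF z(1)] by (simp add: inner_add_left dot_lmul_matrix)
    have "f1 + transpose M1 *v z1 = f2 - transpose M2 *v z2"
      using e by (simp add: algebra_simps)
    then show "\<bar>(f1 + transpose M1 *v z1) \<bullet> w - f2 \<bullet> w\<bar> \<le> C * norm (M2 *v w)"
      using bound[OF z(2)] by (simp add: inner_diff_left dot_lmul_matrix)
  qed
qed

lemma transversal_images_separating_direction:
  fixes A1 A2 :: "real^'d^'d" and g1 g2 :: "real^'d"
  assumes inv: "invertible A1" "invertible A2"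
    and transv: "\<not> (\<exists>S. subspace S \<and> dim S = CARD('d) \<and>
          S \<subseteq> (\<lambda>(a, b). (A1 *v a, g1 \<bullet> a + b)) ` cone C \<inter> (\<lambda>(a, b). (A2 *v a, g2 \<bullet> a + b)) ` cone C)"
  obtains w where "w \<noteq> 0"
    and "\<bar>g1 \<bullet> (matrix_inv A1 *v w) - g2 \<bullet> (matrix_inv A2 *v w)\<bar>
           > C * (norm (matrix_inv A1 *v w) + norm (matrix_inv A2 *v w))"
proof -
  define M1 where "M1 = matrix_inv A1"
  define M2 where "M2 = matrix_inv A2"
  have "\<exists>w. w \<noteq> 0 \<and> \<bar>g1 \<bullet> (M1 *v w) - g2 \<bullet> (M2 *v w)\<bar> > C * (norm (M1 *v w) + norm (M2 *v w))"
  proof (rule ccontr)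
    assume "\<nexists>w. w \<noteq> 0 \<and> \<bar>g1 \<bullet> (M1 *v w) - g2 \<bullet> (M2 *v w)\<bar> > C * (norm (M1 *v w) + norm (M2 *v w))"
    then have close: "\<bar>g1 \<bullet> (M1 *v w) - g2 \<bullet> (M2 *v w)\<bar> \<le> C * (norm (M1 *v w) + norm (M2 *v w))" for w
      by (cases "w = 0") (auto simp: not_less)
    have "C \<ge> 0"
    proof (rule ccontr)
      assume "\<not> C \<ge> 0"
      have "A1 *v (M1 *v 1) = 1"
        using matrix_inv_right[OF inv(1)] by (simp add: M1_def matrix_vector_mul_assoc)
      then have "M1 *v 1 \<noteq> 0"
        by (metis matrix_vector_mult_0_right zero_neq_one)
      then have "C * (norm (M1 *v 1) + norm (M2 *v 1)) < 0"
        using \<open>\<not> C \<ge> 0\<close> by (intro mult_neg_pos) (auto intro: add_pos_nonneg)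
      then show False using close[of "1"] by linarith
    qed
    then obtain u where u1: "\<And>w. \<bar>u \<bullet> w - (transpose M1 *v g1) \<bullet> w\<bar> \<le> C * norm (M1 *v w)"
      and u2: "\<And>w. \<bar>u \<bullet> w - (transpose M2 *v g2) \<bullet> w\<bar> \<le> C * norm (M2 *v w)"
      using functional_between_close_functionals[of C "transpose M1 *v g1" "transpose M2 *v g2" M1 M2]
        close by (auto simp: dot_lmul_matrix)
    have "range (\<lambda>w. (w, u \<bullet> w))
        \<subseteq> (\<lambda>(a, b). (A1 *v a, g1 \<bullet> a + b)) ` cone C \<inter> (\<lambda>(a, b). (A2 *v a, g2 \<bullet> a + b)) ` cone C"
    proof (clarify, intro IntI)
      fix w
      show "(w, u \<bullet> w) \<in> (\<lambda>(a, b). (A1 *v a, g1 \<bullet> a + b)) ` cone C"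
        using u1[of w] by (simp add: shear_image_cone_iff[OF matrix_inv_left[OF inv(1)]] M1_def dot_lmul_matrix)
      show "(w, u \<bullet> w) \<in> (\<lambda>(a, b). (A2 *v a, g2 \<bullet> a + b)) ` cone C"
        using u2[of w] by (simp add: shear_image_cone_iff[OF matrix_inv_left[OF inv(2)]] M2_def dot_lmul_matrix)
    qed
    then show False
      using transv graph_of_functional_subspace by blast
  qed
  then show ?thesis using that unfolding M1_def M2_def by blast
qed

lemma line_of_strict_domination:
  fixes F :: "'a::euclidean_space \<Rightarrow> real" and G1 G2 :: "'a \<Rightarrow> 'b::real_normed_vector"
  assumes "linear F" "linear G1" "linear G2" "w \<noteq> 0"
    and dom: "\<bar>F w\<bar> > C * (norm (G1 w) + norm (G2 w))"
  shows "\<exists>L. subspace L \<and> dim L = 1 \<and> (\<forall>v\<in>L - {0}. \<bar>F v\<bar> > C * (norm (G1 v) + norm (G2 v)))"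
proof (intro exI conjI ballI)
  show "subspace (span {w})" "dim (span {w}) = 1"
    using \<open>w \<noteq> 0\<close> by (auto simp: subspace_span)
  fix v assume "v \<in> span {w} - {0}"
  then obtain t where t: "v = t *\<^sub>R w" "t \<noteq> 0" by (auto simp: span_singleton)
  have Fv: "\<bar>F v\<bar> = \<bar>t\<bar> * \<bar>F w\<bar>"
    using assms(1) by (simp add: t(1) linear_scale abs_mult)
  have Gv: "C * (norm (G1 v) + norm (G2 v)) = \<bar>t\<bar> * (C * (norm (G1 w) + norm (G2 w)))"
    using assms(2,3) by (simp add: t(1) linear_scale distrib_left mult.left_commute)
  show "\<bar>F v\<bar> > C * (norm (G1 v) + norm (G2 v))"
    unfolding Fv Gv using mult_strict_left_mono[OF dom, of "\<bar>t\<bar>"] t(2) by simp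
qed

definition cylinder :: "(real^'d) set \<Rightarrow> (real^'d \<Rightarrow> real^'d) \<Rightarrow> (real^'d) set list \<Rightarrow> (real^'d) set"
  where "cylinder X T ws = {x\<in>X. \<forall>j<length ws. (T ^^ j) x \<in> ws ! j}"

lemma refinement_eq_cylinder:
  assumes "\<omega> \<in> refinement X P T n"
  obtains ws where "length ws = n" "set ws \<subseteq> P" "\<omega> = cylinder X T ws"
  using assms unfolding refinement_def cylinder_def by auto

lemma cylinder_snoc: "cylinder X T (ws @ [w]) = {x \<in> cylinder X T ws. (T ^^ length ws) x \<in> w}"
  by (auto simp: cylinder_def nth_append less_Suc_eq)

lemma has_derivative_funpow:
  fixes T :: "real^'d \<Rightarrow> real^'d"
  assumes "\<forall>i<j. (T has_derivative (\<lambda>h. DT ((T ^^ i) x) *v h)) (at ((T ^^ i) x))"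
  shows "((T ^^ j) has_derivative (\<lambda>h. DTpow T DT j x *v h)) (at x)"
  using assms
proof (induction j)
  case 0
  then show ?case by (simp add: has_derivative_id[unfolded id_def])
next
  case (Suc j)
  have "((T \<circ> T ^^ j) has_derivative ((\<lambda>h. DT ((T ^^ j) x) *v h) \<circ> (\<lambda>h. DTpow T DT j x *v h))) (at x)"
    using Suc by (intro diff_chain_at) auto
  then show ?case by (simp add: o_def matrix_vector_mul_assoc)
qed

lemma invertible_DTpow:
  assumes "\<forall>i<j. invertible (DT ((T ^^ i) x))"
  shows "invertible (DTpow T DT j x)"
  using assms
proof (induction j)
  case 0
  then show ?case by (simp add: invertible_def)
next
  case (Suc j)
  then show ?case by (simp add: invertible_mult)
qed

lemma C1_diffeo_on_invertible:
  assumes "open w" "C1_diffeo_on T DT w" "x \<in> w"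
  shows "invertible (DT x)"
proof -
  from assms(2) obtain g Dg where Td: "\<forall>x\<in>w. (T has_derivative (\<lambda>h. DT x *v h)) (at x)"
    and gT: "\<forall>x\<in>w. g (T x) = x"
    and gd: "\<forall>y\<in>T ` w. (g has_derivative (\<lambda>h. Dg y *v h)) (at y)"
    unfolding C1_diffeo_on_def by blast
  have "((g \<circ> T) has_derivative ((\<lambda>h. Dg (T x) *v h) \<circ> (\<lambda>h. DT x *v h))) (at x)"
    using Td gd assms(3) by (intro diff_chain_at) auto
  moreover have "((g \<circ> T) has_derivative id) (at x)"
    by (rule has_derivative_transform_within_open[OF has_derivative_id assms(1,3)]) (use gT in simp)
  ultimately have "(\<lambda>h. Dg (T x) *v h) \<circ> (\<lambda>h. DT x *v h) = id"
    by (rule has_derivative_unique)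
  then have "Dg (T x) ** DT x = mat 1"
    by (simp add: matrix_eq fun_eq_iff matrix_vector_mul_assoc)
  then show ?thesis
    using invertible_left_inverse by blast
qed

context
  fixes X :: "(real^'d) set" and T :: "real^'d \<Rightarrow> real^'d" and DT :: "real^'d \<Rightarrow> real^'d^'d"
    and ws :: "(real^'d) set list"
  assumes branches: "\<forall>w\<in>set ws. open w \<and> C1_diffeo_on T DT w"
begin

lemma cylinder_has_derivative_funpow:
  assumes "x \<in> cylinder X T ws" "j \<le> length ws"
  shows "((T ^^ j) has_derivative (\<lambda>h. DTpow T DT j x *v h)) (at x)"
proof (rule has_derivative_funpow, intro allI impI)
  fix i assume "i < j"
  then have "(T ^^ i) x \<in> ws ! i" "ws ! i \<in> set ws"
    using assms by (auto simp: cylinder_def)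
  then show "(T has_derivative (\<lambda>h. DT ((T ^^ i) x) *v h)) (at ((T ^^ i) x))"
    using branches unfolding C1_diffeo_on_def by blast
qed

lemma cylinder_invertible_DTpow:
  assumes "x \<in> cylinder X T ws"
  shows "invertible (DTpow T DT (length ws) x)"
proof (rule invertible_DTpow, intro allI impI)
  fix i assume "i < length ws"
  then have "(T ^^ i) x \<in> ws ! i" "ws ! i \<in> set ws"
    using assms by (auto simp: cylinder_def)
  then show "invertible (DT ((T ^^ i) x))"
    using branches C1_diffeo_on_invertible by blast
qed

lemma cylinder_has_derivative_tau_n:
  fixes \<tau> :: "real^'d \<Rightarrow> real" and D\<tau> :: "real^'d \<Rightarrow> real^'d"
  assumes "\<forall>w\<in>set ws. w \<subseteq> X"
    and tau_deriv: "\<forall>x\<in>X. (\<tau> has_derivative (\<lambda>h. D\<tau> x \<bullet> h)) (at x)"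
    and x: "x \<in> cylinder X T ws"
  shows "(tau_n T \<tau> (length ws) has_derivative (\<lambda>h. Dtau_n T DT D\<tau> (length ws) x \<bullet> h)) (at x)"
proof -
  have "((\<lambda>y. \<tau> ((T ^^ j) y)) has_derivative (\<lambda>h. D\<tau> ((T ^^ j) x) \<bullet> (DTpow T DT j x *v h))) (at x)"
    if "j < length ws" for j
  proof -
    have "(T ^^ j) x \<in> X"
      using that x assms(1) by (force simp: cylinder_def)
    then have "(\<tau> has_derivative (\<lambda>h. D\<tau> ((T ^^ j) x) \<bullet> h)) (at ((T ^^ j) x))"
      using tau_deriv by blast
    from diff_chain_at[OF cylinder_has_derivative_funpow[OF x] this] show ?thesis
      using that by (simp add: o_def)
  qed
  then have "((\<lambda>y. \<Sum>j<length ws. \<tau> ((T ^^ j) y)) has_derivative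
      (\<lambda>h. \<Sum>j<length ws. D\<tau> ((T ^^ j) x) \<bullet> (DTpow T DT j x *v h))) (at x)"
    by (intro has_derivative_sum) auto
  then show ?thesis
    unfolding tau_n_def[abs_def] Dtau_n_def by (simp add: inner_sum_left dot_lmul_matrix)
qed

lemma continuous_on_cylinder_funpow:
  assumes "j \<le> length ws"
  shows "continuous_on (cylinder X T ws) (T ^^ j)"
  using cylinder_has_derivative_funpow[OF _ assms]
  by (intro continuous_at_imp_continuous_on) (blast dest: has_derivative_continuous)

end

lemma open_cylinder:
  assumes "open X" "\<forall>w\<in>set ws. open w \<and> C1_diffeo_on T DT w"
  shows "open (cylinder X T ws)"
  using assms(2)
proof (induction ws rule: rev_induct)
  case Nil
  then show ?case using assms(1) by (simp add: cylinder_def)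
next
  case (snoc w ws)
  have "cylinder X T (ws @ [w]) = cylinder X T ws \<inter> (T ^^ length ws) -` w"
    by (auto simp: cylinder_snoc)
  moreover have "continuous_on (cylinder X T ws) (T ^^ length ws)"
    using snoc.prems by (intro continuous_on_cylinder_funpow) auto
  ultimately show ?case
    using snoc by (auto intro: continuous_open_preimage)
qed

lemma inj_on_cylinder_funpow:
  assumes "\<forall>w\<in>set ws. inj_on T w"
  shows "inj_on (T ^^ length ws) (cylinder X T ws)"
  using assms
proof (induction ws rule: rev_induct)
  case Nil
  then show ?case by simp
next
  case (snoc w ws)
  show ?case
  proof (rule inj_onI)
    fix x x' assume x: "x \<in> cylinder X T (ws @ [w])" and x': "x' \<in> cylinder X T (ws @ [w])"
      and eq: "(T ^^ length (ws @ [w])) x = (T ^^ length (ws @ [w])) x'"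
    then have "(T ^^ length ws) x = (T ^^ length ws) x'"
      using snoc.prems by (auto simp: cylinder_snoc dest: inj_onD)
    then show "x = x'"
      using snoc x x' by (auto simp: cylinder_snoc dest: inj_onD)
  qed
qed

lemma refinement_branch_derivatives:
  fixes \<tau> :: "real^'d \<Rightarrow> real" and D\<tau> :: "real^'d \<Rightarrow> real^'d"
  assumes X: "open X"
    and P_sub: "\<forall>w\<in>P. open w \<and> w \<subseteq> X"
    and T_diffeo: "\<forall>w\<in>P. C1_diffeo_on T DT w"
    and tau_deriv: "\<forall>x\<in>X. (\<tau> has_derivative (\<lambda>h. D\<tau> x \<bullet> h)) (at x)"
    and \<omega>: "\<omega> \<in> refinement X P T n" and x: "x \<in> \<omega>"
  shows "ell T n \<omega> ((T ^^ n) x) = x"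
    and "invertible (DTpow T DT n x)"
    and "frechet_derivative (ell T n \<omega>) (at ((T ^^ n) x)) = (\<lambda>h. matrix_inv (DTpow T DT n x) *v h)"
    and "frechet_derivative (tau_n T \<tau> n \<circ> ell T n \<omega>) (at ((T ^^ n) x))
           = (\<lambda>h. Dtau_n T DT D\<tau> n x \<bullet> (matrix_inv (DTpow T DT n x) *v h))"
proof -
  obtain ws where ws: "length ws = n" "set ws \<subseteq> P" "\<omega> = cylinder X T ws"
    using refinement_eq_cylinder[OF \<omega>] .
  have branches: "\<forall>w\<in>set ws. open w \<and> C1_diffeo_on T DT w"
    using ws(2) P_sub T_diffeo by blast
  have "inj_on (T ^^ n) \<omega>"
    using inj_on_cylinder_funpow[of ws T X] branches ws unfolding C1_diffeo_on_def by auto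
  then have ell_inverse: "ell T n \<omega> ((T ^^ n) z) = z" if "z \<in> \<omega>" for z
    unfolding ell_def using that by (simp add: the_inv_into_f_f)
  then show "ell T n \<omega> ((T ^^ n) x) = x" using x .
  let ?A = "DTpow T DT n x"
  show "invertible ?A"
    using cylinder_invertible_DTpow[OF branches] x ws by simp
  then have id: "(\<lambda>h. ?A *v h) \<circ> (\<lambda>h. matrix_inv ?A *v h) = id"
    by (simp add: fun_eq_iff matrix_vector_mul_assoc matrix_inv_right)
  have Tn_deriv: "((T ^^ n) has_derivative (\<lambda>h. ?A *v h)) (at x)"
    using cylinder_has_derivative_funpow[OF branches] x ws by simp
  have open_\<omega>: "open \<omega>"
    using open_cylinder[OF X branches] ws by simp
  have cont: "continuous_on \<omega> (T ^^ n)"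
    using continuous_on_cylinder_funpow[OF branches, of n X] ws by simp
  have ell_deriv: "(ell T n \<omega> has_derivative (\<lambda>h. matrix_inv ?A *v h)) (at ((T ^^ n) x))"
    by (rule has_derivative_inverse_strong[OF open_\<omega> x cont ell_inverse Tn_deriv id])
  then show "frechet_derivative (ell T n \<omega>) (at ((T ^^ n) x)) = (\<lambda>h. matrix_inv ?A *v h)"
    by (rule frechet_derivative_at[symmetric])
  have "\<forall>w\<in>set ws. w \<subseteq> X"
    using ws(2) P_sub by blast
  then have "(tau_n T \<tau> n has_derivative (\<lambda>h. Dtau_n T DT D\<tau> n x \<bullet> h)) (at (ell T n \<omega> ((T ^^ n) x)))"
    using cylinder_has_derivative_tau_n[OF branches _ tau_deriv] x ws unfolding ell_inverse[OF x] by simp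
  from diff_chain_at[OF ell_deriv this]
  have "((tau_n T \<tau> n \<circ> ell T n \<omega>) has_derivative (\<lambda>h. Dtau_n T DT D\<tau> n x \<bullet> (matrix_inv ?A *v h)))
          (at ((T ^^ n) x))"
    by (simp add: o_def)
  then show "frechet_derivative (tau_n T \<tau> n \<circ> ell T n \<omega>) (at ((T ^^ n) x))
          = (\<lambda>h. Dtau_n T DT D\<tau> n x \<bullet> (matrix_inv ?A *v h))"
    by (rule frechet_derivative_at[symmetric])
qed

theorem lemma3p7:
  fixes X :: "(real^'d) set" and P :: "(real^'d) set set"
    and T :: "real^'d \<Rightarrow> real^'d" and DT :: "real^'d \<Rightarrow> real^'d^'d"
    and \<tau> :: "real^'d \<Rightarrow> real" and D\<tau> :: "real^'d \<Rightarrow> real^'d"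
    and lam \<alpha> C3 C5 :: real and n :: nat and \<omega> \<upsilon> :: "(real^'d) set" and y :: "real^'d"
  assumes X: "open X" "bounded X"
    and TX: "\<forall>x\<in>X. T x \<in> X"
    and P_fin: "finite P" and P_disj: "disjoint P"
    and P_sub: "\<forall>w\<in>P. w \<noteq> {} \<and> open w \<and> connected w \<and> w \<subseteq> X"
    and P_full: "X - \<Union>P \<in> null_sets lebesgue"
    and T_diffeo: "\<forall>w\<in>P. C1_diffeo_on T DT w"
    and lam: "lam > 0"
    and expand: "\<forall>m. \<forall>w\<in>refinement X P T m. \<forall>x\<in>w. \<forall>v.
                   norm (matrix_inv (DTpow T DT m x) *v v) \<le> exp (- lam * real m) * norm v"
    and tau_pos: "\<forall>x\<in>X. \<tau> x > 0"
    and tau_deriv: "\<forall>x\<in>X. (\<tau> has_derivative (\<lambda>h. D\<tau> x \<bullet> h)) (at x)"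
    and alpha: "0 < \<alpha>" "\<alpha> \<le> 1"
    and tau_hoelder: "\<exists>H. \<forall>x\<in>X. \<forall>x'\<in>X. norm (D\<tau> x - D\<tau> x') \<le> H * dist x x' powr \<alpha>"
    and C3: "\<forall>w\<in>P. \<forall>x\<in>w. \<forall>v. \<bar>D\<tau> x \<bullet> (matrix_inv (DT x) *v v)\<bar> \<le> C3 * norm v"
    and C5: "C5 = 2 * C3 / (1 - exp (- lam))"
    and \<omega>: "\<omega> \<in> refinement X P T n" and \<upsilon>: "\<upsilon> \<in> refinement X P T n"
    and y: "y \<in> (T ^^ n) ` \<omega> \<inter> (T ^^ n) ` \<upsilon>"
    and transv: "transversal T DT D\<tau> C5 n (ell T n \<omega> y) (ell T n \<upsilon> y)"
  shows "\<exists>L :: (real^'d) set. subspace L \<and> dim L = 1 \<and>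
           (\<forall>v\<in>L - {0}.
              \<bar>frechet_derivative (tau_n T \<tau> n \<circ> ell T n \<omega>) (at y) v
               - frechet_derivative (tau_n T \<tau> n \<circ> ell T n \<upsilon>) (at y) v\<bar>
              > C5 * (norm (frechet_derivative (ell T n \<omega>) (at y) v)
                      + norm (frechet_derivative (ell T n \<upsilon>) (at y) v)))"
proof -
  \<comment> \<open>Expansion, Hoelder regularity and the value of \<open>C5\<close> play no role: transversality alone
    forces the separation.\<close>
  obtain x1 x2 where x1: "x1 \<in> \<omega>" "(T ^^ n) x1 = y" and x2: "x2 \<in> \<upsilon>" "(T ^^ n) x2 = y"
    using y by auto
  have P_open: "\<forall>w\<in>P. open w \<and> w \<subseteq> X" using P_sub by blast
  note branch1 = refinement_branch_derivatives[OF X(1) P_open T_diffeo tau_deriv \<omega> x1(1), unfolded x1(2)]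
  note branch2 = refinement_branch_derivatives[OF X(1) P_open T_diffeo tau_deriv \<upsilon> x2(1), unfolded x2(2)]
  obtain w where "w \<noteq> 0"
    and "\<bar>Dtau_n T DT D\<tau> n x1 \<bullet> (matrix_inv (DTpow T DT n x1) *v w)
           - Dtau_n T DT D\<tau> n x2 \<bullet> (matrix_inv (DTpow T DT n x2) *v w)\<bar>
         > C5 * (norm (matrix_inv (DTpow T DT n x1) *v w) + norm (matrix_inv (DTpow T DT n x2) *v w))"
  proof (rule transversal_images_separating_direction)
    show "invertible (DTpow T DT n x1)" "invertible (DTpow T DT n x2)"
      using branch1(2) branch2(2) .
    show "\<not> (\<exists>S. subspace S \<and> dim S = CARD('d) \<and>
          S \<subseteq> (\<lambda>(a, b). (DTpow T DT n x1 *v a, Dtau_n T DT D\<tau> n x1 \<bullet> a + b)) ` cone C5 \<inter>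
               (\<lambda>(a, b). (DTpow T DT n x2 *v a, Dtau_n T DT D\<tau> n x2 \<bullet> a + b)) ` cone C5)"
      using transv unfolding transversal_def calD_def branch1(1) branch2(1) .
  qed
  then show ?thesis
    unfolding branch1(3,4) branch2(3,4)
    by (intro line_of_strict_domination)
      (auto intro!: linearI simp: matrix_vector_right_distrib matrix_vector_mult_scaleR inner_add_right right_diff_distrib)
qed

end
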